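(* If $G$ is a graph with no isolated vertices, then $\gamma_{\rm gr}^t(G)\le 2\gamma_{\rm gr}(G)$.
   Context: $N(v)$ denotes the open neighborhood and $N[v]=N(v)\cup\{v\}$ the closed neighborhood of $v$. A sequence $S=(v_1,\ldots,v_k)$ of distinct vertices is a legal open neighborhood sequence if $N(v_i)\setminus \bigcup_{j=1}^{i-1} N(v_j)\neq\emptyset$ for every $i\in\{2,\ldots,k\}$, and a total dominating sequence if moreover $\{v_1,\ldots,v_k\}$ is a total dominating set (every vertex has a neighbor in it); $\gamma_{\rm gr}^t(G)$ is the maximum length of a total dominating sequence. A sequence $S=(v_1,\ldots,v_k)$ of distinct vertices is a legal closed neighborhood sequence if $N[v_i]\setminus \bigcup_{j=1}^{i-1} N[v_j]\neq\emptyset$ for every $i\in\{2,\ldots,k\}$, and a dominating sequence if moreover $\{v_1,\ldots,v_k\}$ is a dominating set (every vertex is in it or has a neighbor in it); the Grundy domination number $\gamma_{\rm gr}(G)$ is the maximum length of a dominating sequence. *)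

theory Defs
  imports Main
begin

definition simple_graph :: "'a set \<Rightarrow> ('a \<Rightarrow> 'a \<Rightarrow> bool) \<Rightarrow> bool" where
  "simple_graph V E \<longleftrightarrow> finite V \<and> (\<forall>u v. E u v \<longrightarrow> u \<in> V \<and> v \<in> V)
     \<and> (\<forall>u v. E u v \<longrightarrow> E v u) \<and> (\<forall>v. \<not> E v v)"

definition open_nbhd :: "'a set \<Rightarrow> ('a \<Rightarrow> 'a \<Rightarrow> bool) \<Rightarrow> 'a \<Rightarrow> 'a set" where
  "open_nbhd V E v = {u \<in> V. E v u}"

definition closed_nbhd :: "'a set \<Rightarrow> ('a \<Rightarrow> 'a \<Rightarrow> bool) \<Rightarrow> 'a \<Rightarrow> 'a set" where
  "closed_nbhd V E v = insert v (open_nbhd V E v)"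

definition no_isolated :: "'a set \<Rightarrow> ('a \<Rightarrow> 'a \<Rightarrow> bool) \<Rightarrow> bool" where
  "no_isolated V E \<longleftrightarrow> (\<forall>v\<in>V. \<exists>u\<in>V. E v u)"

text \<open>Legal open neighborhood sequence (list indices 0-based: condition for all i with 1 <= i).\<close>
definition legal_open_seq :: "'a set \<Rightarrow> ('a \<Rightarrow> 'a \<Rightarrow> bool) \<Rightarrow> 'a list \<Rightarrow> bool" where
  "legal_open_seq V E S \<longleftrightarrow> distinct S \<and> set S \<subseteq> V \<and>
     (\<forall>i. 1 \<le> i \<and> i < length S \<longrightarrow>
        open_nbhd V E (S ! i) - (\<Union>j<i. open_nbhd V E (S ! j)) \<noteq> {})"

definition legal_closed_seq :: "'a set \<Rightarrow> ('a \<Rightarrow> 'a \<Rightarrow> bool) \<Rightarrow> 'a list \<Rightarrow> bool" where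
  "legal_closed_seq V E S \<longleftrightarrow> distinct S \<and> set S \<subseteq> V \<and>
     (\<forall>i. 1 \<le> i \<and> i < length S \<longrightarrow>
        closed_nbhd V E (S ! i) - (\<Union>j<i. closed_nbhd V E (S ! j)) \<noteq> {})"

definition total_dominating_set :: "'a set \<Rightarrow> ('a \<Rightarrow> 'a \<Rightarrow> bool) \<Rightarrow> 'a set \<Rightarrow> bool" where
  "total_dominating_set V E D \<longleftrightarrow> D \<subseteq> V \<and> (\<forall>v\<in>V. \<exists>u\<in>D. E v u)"

definition dominating_set :: "'a set \<Rightarrow> ('a \<Rightarrow> 'a \<Rightarrow> bool) \<Rightarrow> 'a set \<Rightarrow> bool" where
  "dominating_set V E D \<longleftrightarrow> D \<subseteq> V \<and> (\<forall>v\<in>V. v \<in> D \<or> (\<exists>u\<in>D. E v u))"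

definition total_dominating_seq :: "'a set \<Rightarrow> ('a \<Rightarrow> 'a \<Rightarrow> bool) \<Rightarrow> 'a list \<Rightarrow> bool" where
  "total_dominating_seq V E S \<longleftrightarrow> legal_open_seq V E S \<and> total_dominating_set V E (set S)"

definition dominating_seq :: "'a set \<Rightarrow> ('a \<Rightarrow> 'a \<Rightarrow> bool) \<Rightarrow> 'a list \<Rightarrow> bool" where
  "dominating_seq V E S \<longleftrightarrow> legal_closed_seq V E S \<and> dominating_set V E (set S)"

definition grundy_total_dom :: "'a set \<Rightarrow> ('a \<Rightarrow> 'a \<Rightarrow> bool) \<Rightarrow> nat" where
  "grundy_total_dom V E = Max (length ` {S. total_dominating_seq V E S})"

definition grundy_dom :: "'a set \<Rightarrow> ('a \<Rightarrow> 'a \<Rightarrow> bool) \<Rightarrow> nat" where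
  "grundy_dom V E = Max (length ` {S. dominating_seq V E S})"

end

theory Submission
  imports Defs
begin

text \<open>Let \<open>S = (v\<^sub>1, \<dots>, v\<^sub>k)\<close> be a longest total dominating sequence.
Call \<open>v\<^sub>i\<close> closed-new if its closed footprint \<open>N[v\<^sub>i] - \<Union>{N[v\<^sub>j] | j < i}\<close> is
nonempty. The closed-new entries form a legal closed neighbourhood sequence, which
extends greedily to a dominating sequence, so there are at most \<open>\<gamma>\<^sub>g\<^sub>r(G)\<close> of them.
If \<open>v\<^sub>i\<close> (\<open>i > 1\<close>) is not closed-new, a vertex of its open footprint lies in some \<open>N[v\<^sub>j]\<close>,
\<open>j < i\<close>, but not in \<open>N(v\<^sub>j)\<close>, hence equals \<open>v\<^sub>j\<close>. This \<open>v\<^sub>j\<close> is closed-new: otherwise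
a vertex \<open>v\<^sub>l\<close> of its own open footprint would put \<open>v\<^sub>j\<close> into \<open>N(v\<^sub>l)\<close> with \<open>l < i\<close>. As footprints
of different entries are disjoint, \<open>i \<mapsto> j\<close> is injective, so at most half of the
entries of \<open>S\<close> fail to be closed-new.\<close>

definition footprint :: "('a \<Rightarrow> 'a set) \<Rightarrow> 'a list \<Rightarrow> nat \<Rightarrow> 'a set" where
  "footprint N S i = N (S ! i) - (\<Union>j<i. N (S ! j))"

definition legal_seq :: "('a \<Rightarrow> 'a set) \<Rightarrow> 'a list \<Rightarrow> bool" where
  "legal_seq N S \<longleftrightarrow> (\<forall>i. 1 \<le> i \<and> i < length S \<longrightarrow> footprint N S i \<noteq> {})"

lemma legal_open_seq_iff:
  "legal_open_seq V E S \<longleftrightarrow> distinct S \<and> set S \<subseteq> V \<and> legal_seq (open_nbhd V E) S"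
  by (simp add: legal_open_seq_def legal_seq_def footprint_def)

lemma legal_closed_seq_iff:
  "legal_closed_seq V E S \<longleftrightarrow> distinct S \<and> set S \<subseteq> V \<and> legal_seq (closed_nbhd V E) S"
  by (simp add: legal_closed_seq_def legal_seq_def footprint_def)

lemma footprints_disjoint:
  assumes "i \<noteq> i'"
  shows "footprint N S i \<inter> footprint N S i' = {}"
  using assms by (cases i i' rule: linorder_cases) (auto simp: footprint_def)

lemma footprint_snoc:
  assumes "i < length S"
  shows "footprint N (S @ [x]) i = footprint N S i"
  using assms by (auto simp: footprint_def nth_append)

lemma footprint_snoc_last:
  "footprint N (S @ [x]) (length S) = N x - \<Union>(N ` set S)"
  by (auto simp: footprint_def nth_append in_set_conv_nth dest: nth_mem)

lemma legal_seq_snoc: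
  "legal_seq N (S @ [x]) \<longleftrightarrow> legal_seq N S \<and> (S = [] \<or> \<not> N x \<subseteq> \<Union>(N ` set S))"
proof -
  have "legal_seq N (S @ [x]) \<longleftrightarrow>
      legal_seq N S \<and> (S \<noteq> [] \<longrightarrow> footprint N (S @ [x]) (length S) \<noteq> {})"
    unfolding legal_seq_def by (auto simp: footprint_snoc less_Suc_eq Suc_le_eq)
  then show ?thesis
    by (auto simp: footprint_snoc_last)
qed

text \<open>Deleting entries of a sequence can only enlarge the footprints of the remaining ones.\<close>

lemma legal_seq_nths:
  assumes "\<forall>i\<in>I. 0 < i \<and> i < length S \<longrightarrow> footprint N S i \<noteq> {}"
  shows "legal_seq N (nths S I)"
  using assms
proof (induction S rule: rev_induct)
  case Nil
  show ?case by (simp add: legal_seq_def)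
next
  case (snoc x S)
  have legal_prefix: "legal_seq N (nths S I)"
    using snoc.prems
    by (intro snoc.IH) (metis footprint_snoc length_append_singleton less_SucI)
  have new_last: "nths S I = [] \<or> \<not> N x \<subseteq> \<Union>(N ` set (nths S I))" if "length S \<in> I"
  proof (cases "S = []")
    case False
    then have "N x - \<Union>(N ` set S) \<noteq> {}"
      using snoc.prems that by (metis footprint_snoc_last length_append_singleton
          length_greater_0_conv lessI)
    then show ?thesis using set_nths_subset[of S I] by blast
  qed simp
  show ?case
    using legal_prefix new_last by (auto simp: nths_append legal_seq_snoc)
qed

lemma closed_footprint_0: "footprint (closed_nbhd V E) S 0 \<noteq> {}"
  by (simp add: footprint_def closed_nbhd_def)

lemma open_footprint_in_prefix:
  assumes "footprint (closed_nbhd V E) S i = {}" and "u \<in> footprint (open_nbhd V E) S i"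
  shows "\<exists>j<i. u = S ! j"
  using assms by (auto simp: footprint_def closed_nbhd_def)

lemma closed_new_if_in_open_footprint:
  assumes "symp E" and S: "legal_open_seq V E S" and "j < i" "i < length S"
    and in_fp: "S ! j \<in> footprint (open_nbhd V E) S i"
  shows "footprint (closed_nbhd V E) S j \<noteq> {}"
proof
  assume closed_empty: "footprint (closed_nbhd V E) S j = {}"
  then have "0 < j" "j < length S"
    using closed_footprint_0[of V E S] \<open>j < i\<close> \<open>i < length S\<close> by (auto intro: gr0I)
  then have "footprint (open_nbhd V E) S j \<noteq> {}"
    using S by (simp add: legal_open_seq_iff legal_seq_def)
  then obtain u where "u \<in> footprint (open_nbhd V E) S j"
    by blast
  moreover obtain l where "l < j" "u = S ! l"
    using open_footprint_in_prefix[OF closed_empty \<open>u \<in> _\<close>] by blast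
  ultimately have "S ! j \<in> open_nbhd V E (S ! l)"
    using \<open>symp E\<close> S \<open>j < length S\<close>
    by (auto simp: footprint_def open_nbhd_def legal_open_seq_def dest: sympD)
  then show False
    using in_fp \<open>l < j\<close> \<open>j < i\<close> by (auto simp: footprint_def)
qed

lemma length_le_twice_closed_new:
  assumes "symp E" and S: "legal_open_seq V E S"
  shows "length S \<le> 2 * card {i. i < length S \<and> footprint (closed_nbhd V E) S i \<noteq> {}}"
    (is "_ \<le> 2 * card ?new")
proof -
  define old where "old = {i. i < length S \<and> footprint (closed_nbhd V E) S i = {}}"
  have "\<exists>j<i. S ! j \<in> footprint (open_nbhd V E) S i" if "i \<in> old" for i
  proof -
    have "0 < i" "i < length S"
      using that closed_footprint_0[of V E S] by (auto simp: old_def intro: gr0I)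
    then have "footprint (open_nbhd V E) S i \<noteq> {}"
      using S by (simp add: legal_open_seq_iff legal_seq_def)
    then obtain u where "u \<in> footprint (open_nbhd V E) S i"
      by blast
    then show ?thesis
      using open_footprint_in_prefix[of V E S i u] that by (auto simp: old_def)
  qed
  then obtain f where f: "\<And>i. i \<in> old \<Longrightarrow> f i < i \<and> S ! f i \<in> footprint (open_nbhd V E) S i"
    by metis
  have "inj_on f old"
    using f footprints_disjoint by (metis disjoint_iff inj_onI)
  moreover have "f ` old \<subseteq> ?new"
    using f closed_new_if_in_open_footprint[OF assms] by (force simp: old_def)
  ultimately have "card old \<le> card ?new"
    by (simp add: card_inj_on_le)
  moreover have "length S = card old + card ?new"
  proof -
    have "{..<length S} = old \<union> ?new" "old \<inter> ?new = {}"
      by (auto simp: old_def)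
    then show ?thesis
      by (metis card_Un_disjoint card_lessThan finite_Un finite_lessThan)
  qed
  ultimately show ?thesis by linarith
qed

lemma legal_open_seq_has_long_closed_subseq:
  assumes "symp E" and S: "legal_open_seq V E S"
  obtains T where "legal_closed_seq V E T" and "length S \<le> 2 * length T"
proof
  let ?new = "{i. i < length S \<and> footprint (closed_nbhd V E) S i \<noteq> {}}"
  show "legal_closed_seq V E (nths S ?new)"
    using S set_nths_subset[of S ?new]
    by (auto simp: legal_closed_seq_iff legal_open_seq_iff intro: legal_seq_nths)
  have "length (nths S ?new) = card ?new"
    by (simp add: length_nths)
  then show "length S \<le> 2 * length (nths S ?new)"
    using length_le_twice_closed_new[OF assms] by simp
qed

lemma finite_legal_closed_seqs: "finite V \<Longrightarrow> finite {S. legal_closed_seq V E S}"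
  by (rule finite_subset[OF _ finite_subset_distinct]) (auto simp: legal_closed_seq_def)

lemma finite_legal_open_seqs: "finite V \<Longrightarrow> finite {S. legal_open_seq V E S}"
  by (rule finite_subset[OF _ finite_subset_distinct]) (auto simp: legal_open_seq_def)

lemma obtain_unextendable:
  assumes "finite {S. P S}" and "P S\<^sub>0"
  obtains S where "P S" and "length S\<^sub>0 \<le> length S" and "\<And>x. \<not> P (S @ [x])"
proof -
  let ?lengths = "length ` {S. P S}"
  obtain S where S: "P S" "length S = Max ?lengths"
    using Max_in[of ?lengths] assms by fastforce
  have "length T \<le> length S" if "P T" for T
    using S that assms(1) by simp
  then show ?thesis
    using that S(1) assms(2) by (metis Suc_n_not_le_n length_append_singleton)
qed

lemma legal_closed_seq_snoc_undominated:
  assumes "symp E" and S: "legal_closed_seq V E S"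
    and w: "w \<in> V" "w \<notin> set S" "\<forall>u\<in>set S. \<not> E w u"
  shows "legal_closed_seq V E (S @ [w])"
proof -
  have "w \<notin> closed_nbhd V E u" if "u \<in> set S" for u
    using that w \<open>symp E\<close> by (auto simp: closed_nbhd_def open_nbhd_def dest: sympD)
  then have "\<not> closed_nbhd V E w \<subseteq> \<Union>(closed_nbhd V E ` set S)"
    by (auto simp: closed_nbhd_def)
  then show ?thesis
    using S w by (simp add: legal_closed_seq_iff legal_seq_snoc)
qed

lemma legal_open_seq_snoc_neighbour:
  assumes "symp E" and S: "legal_open_seq V E S"
    and w: "w \<in> V" "\<forall>u\<in>set S. \<not> E w u" and x: "x \<in> V" "E w x"
  shows "legal_open_seq V E (S @ [x])"
proof -
  have "w \<in> open_nbhd V E x"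
    using w x \<open>symp E\<close> by (auto simp: open_nbhd_def dest: sympD)
  moreover have "w \<notin> open_nbhd V E u" if "u \<in> set S" for u
    using that w \<open>symp E\<close> by (auto simp: open_nbhd_def dest: sympD)
  ultimately have "\<not> open_nbhd V E x \<subseteq> \<Union>(open_nbhd V E ` set S)"
    by blast
  moreover have "x \<notin> set S"
    using w x by blast
  ultimately show ?thesis
    using S x by (simp add: legal_open_seq_iff legal_seq_snoc)
qed

lemma legal_closed_seq_le_grundy_dom:
  assumes "symp E" "finite V" and S: "legal_closed_seq V E S"
  shows "length S \<le> grundy_dom V E"
proof -
  obtain T where T: "legal_closed_seq V E T" "length S \<le> length T"
    and maximal: "\<And>x. \<not> legal_closed_seq V E (T @ [x])"
    using obtain_unextendable[OF finite_legal_closed_seqs[OF \<open>finite V\<close>] S] by metis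
  have "dominating_set V E (set T)"
    using legal_closed_seq_snoc_undominated[OF \<open>symp E\<close> T(1)] maximal T(1)
    by (fastforce simp: dominating_set_def legal_closed_seq_def)
  then have "dominating_seq V E T"
    using T(1) by (simp add: dominating_seq_def)
  moreover have "finite {S. dominating_seq V E S}"
    using finite_legal_closed_seqs[OF \<open>finite V\<close>, of E]
    by (rule rev_finite_subset) (auto simp: dominating_seq_def)
  ultimately have "length T \<le> grundy_dom V E"
    by (simp add: grundy_dom_def)
  with T(2) show ?thesis by simp
qed

lemma grundy_total_dom_attained:
  assumes "symp E" "finite V" "no_isolated V E"
  obtains S where "total_dominating_seq V E S" and "length S = grundy_total_dom V E"
proof -
  have "legal_open_seq V E []"
    by (simp add: legal_open_seq_iff legal_seq_def)
  then obtain T where T: "legal_open_seq V E T"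
    and maximal: "\<And>x. \<not> legal_open_seq V E (T @ [x])"
    using obtain_unextendable[OF finite_legal_open_seqs[OF \<open>finite V\<close>]] by metis
  have "\<exists>u\<in>set T. E w u" if w: "w \<in> V" for w
  proof (rule ccontr)
    assume "\<not> (\<exists>u\<in>set T. E w u)"
    moreover obtain x where "x \<in> V" "E w x"
      using \<open>no_isolated V E\<close> w by (auto simp: no_isolated_def)
    ultimately show False
      using legal_open_seq_snoc_neighbour[OF \<open>symp E\<close> T w] maximal by blast
  qed
  then have "total_dominating_seq V E T"
    using T by (auto simp: total_dominating_seq_def total_dominating_set_def legal_open_seq_def)
  moreover have "finite {S. total_dominating_seq V E S}"
    using finite_legal_open_seqs[OF \<open>finite V\<close>, of E]
    by (rule rev_finite_subset) (auto simp: total_dominating_seq_def)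
  ultimately have "grundy_total_dom V E \<in> length ` {S. total_dominating_seq V E S}"
    unfolding grundy_total_dom_def by (intro Max_in) auto
  then show ?thesis
    using that by auto
qed

theorem mainTheorem16:
  fixes V :: "'a set" and E :: "'a \<Rightarrow> 'a \<Rightarrow> bool"
  assumes "simple_graph V E" and "no_isolated V E"
  shows "grundy_total_dom V E \<le> 2 * grundy_dom V E"
proof -
  have "symp E" "finite V"
    using assms(1) by (auto simp: simple_graph_def intro: sympI)
  obtain S where S: "total_dominating_seq V E S" "length S = grundy_total_dom V E"
    using grundy_total_dom_attained[OF \<open>symp E\<close> \<open>finite V\<close> assms(2)] .
  obtain T where T: "legal_closed_seq V E T" "length S \<le> 2 * length T"
    using legal_open_seq_has_long_closed_subseq[OF \<open>symp E\<close>] S(1)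
    by (auto simp: total_dominating_seq_def)
  have "length T \<le> grundy_dom V E"
    using legal_closed_seq_le_grundy_dom[OF \<open>symp E\<close> \<open>finite V\<close> T(1)] .
  with S(2) T(2) show ?thesis by simp
qed

end
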